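(* There exists an $HS(3,K_4^{(3)}+e;15,5)$.
   Context: $K_4^{(3)}+e$ denotes the 3-uniform hypergraph with vertex set $\{1,2,3,4,5\}$ and edge set $\{\{1,2,3\},\{1,2,4\},\{1,3,4\},\{2,3,4\},\{3,4,5\}\}$. An $HS(3,K_4^{(3)}+e;v,s)$ is a collection of hypergraphs (blocks) on subsets of a $v$-set $V$, each isomorphic to $K_4^{(3)}+e$, whose edge sets partition the set of all 3-subsets of $V$ that are not contained in a fixed $s$-subset of $V$ (the hole). *)

theory Defs
  imports Main
begin

definition K4e_edges :: "nat set set" where
  "K4e_edges = {{1,2,3},{1,2,4},{1,3,4},{2,3,4},{3,4,5}}"

text \<open>A block on V: the edge set of a copy of K_4^(3)+e, i.e. the image of the
  edges of K_4^(3)+e under an injective vertex map from {1..5} into V.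
  (Every vertex of K_4^(3)+e lies in an edge, so the edge set determines the block.)\<close>
definition is_K4e_block :: "'a set \<Rightarrow> 'a set set \<Rightarrow> bool" where
  "is_K4e_block V b \<longleftrightarrow>
     (\<exists>f. inj_on f {1..5::nat} \<and> f ` {1..5} \<subseteq> V \<and> b = (\<lambda>e. f ` e) ` K4e_edges)"

text \<open>HS(3, K_4^(3)+e; V, H): a collection B of blocks on V whose edge sets partition
  the 3-subsets of V not contained in the hole H.\<close>
definition is_HS_K4e :: "'a set \<Rightarrow> 'a set \<Rightarrow> 'a set set set \<Rightarrow> bool" where
  "is_HS_K4e V H B \<longleftrightarrow>
     (\<forall>b\<in>B. is_K4e_block V b) \<and>
     (\<forall>b1\<in>B. \<forall>b2\<in>B. b1 \<noteq> b2 \<longrightarrow> b1 \<inter> b2 = {}) \<and>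
     \<Union>B = {T. T \<subseteq> V \<and> card T = 3 \<and> \<not> T \<subseteq> H}"

definition HS_K4e_exists :: "nat \<Rightarrow> nat \<Rightarrow> bool" where
  "HS_K4e_exists v s \<longleftrightarrow>
     (\<exists>(V::nat set) H B. finite V \<and> card V = v \<and> H \<subseteq> V \<and> card H = s \<and> is_HS_K4e V H B)"

end

theory Submission
  imports Defs "HOL-Library.Nat_Bijection"
begin

text \<open>An explicit design on the points 0..14 with hole {0..4}: 89 copies of K_4^(3)+e.
  Their 445 triples avoid the hole and are pairwise distinct (compared through their binary
  encodings), and since 445 = C(15,3) - C(5,3) they must be all the triples not inside the
  hole.\<close>

text \<open>The edges of the copy of K_4^(3)+e sending vertex i to xs ! (i - 1).\<close>
definition K4e_triples :: "'a list \<Rightarrow> 'a list list" where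
  "K4e_triples xs =
     [[xs!0, xs!1, xs!2], [xs!0, xs!1, xs!3], [xs!0, xs!2, xs!3], [xs!1, xs!2, xs!3],
      [xs!2, xs!3, xs!4]]"

definition K4e_copy :: "'a list \<Rightarrow> 'a set set" where
  "K4e_copy xs = set (map set (K4e_triples xs))"

lemma is_K4e_block_K4e_copy:
  assumes "distinct xs" "length xs = 5" "set xs \<subseteq> V"
  shows "is_K4e_block V (K4e_copy xs)"
  unfolding is_K4e_block_def K4e_copy_def
proof (intro exI conjI)
  let ?f = "\<lambda>i::nat. xs ! (i - 1)"
  show "inj_on ?f {1..5}"
  proof (rule inj_onI)
    fix i j :: nat
    assume "i \<in> {1..5}" "j \<in> {1..5}" "xs ! (i - 1) = xs ! (j - 1)"
    then have "i - 1 = j - 1"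
      using assms(1,2) nth_eq_iff_index_eq[of xs "i - 1" "j - 1"] by auto
    then show "i = j"
      using \<open>i \<in> {1..5}\<close> \<open>j \<in> {1..5}\<close> by auto
  qed
  show "?f ` {1..5} \<subseteq> V"
    using assms(2,3) nth_mem by fastforce
  show "set (map set (K4e_triples xs)) = (\<lambda>e. ?f ` e) ` K4e_edges"
    unfolding K4e_triples_def K4e_edges_def by simp
qed

lemma K4e_triples_are_3_subsets:
  assumes "distinct xs" "length xs = 5" "t \<in> set (K4e_triples xs)"
  shows "distinct t \<and> length t = 3 \<and> set t \<subseteq> set xs"
proof -
  obtain a b c d e where "xs = [a, b, c, d, e]"
    using assms(2) by (auto simp: numeral_eq_Suc length_Suc_conv)
  then show ?thesis
    using assms by (auto simp: K4e_triples_def)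
qed

lemma card_triples_outside_hole:
  assumes "finite V" "H \<subseteq> V"
  shows "card {T. T \<subseteq> V \<and> card T = 3 \<and> \<not> T \<subseteq> H} = (card V choose 3) - (card H choose 3)"
proof -
  have "{T. T \<subseteq> V \<and> card T = 3 \<and> \<not> T \<subseteq> H}
      = {T. T \<subseteq> V \<and> card T = 3} - {T. T \<subseteq> H \<and> card T = 3}"
    using assms(2) by auto
  moreover have "{T. T \<subseteq> H \<and> card T = 3} \<subseteq> {T. T \<subseteq> V \<and> card T = 3}"
    using assms(2) by auto
  moreover have "finite H"
    using assms finite_subset by blast
  ultimately show ?thesis
    by (simp add: card_Diff_subset n_subsets assms(1))
qed

lemma distinct_map_set_if_distinct_codes:
  assumes "\<forall>l\<in>set ls. distinct l"
    and "distinct (map (\<lambda>l. \<Sum>x\<leftarrow>l. (2::nat) ^ x) ls)"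
  shows "distinct (map set ls)"
proof -
  have "map (\<lambda>l. \<Sum>x\<leftarrow>l. (2::nat) ^ x) ls = map set_encode (map set ls)"
    using assms(1) by (simp add: set_encode_def sum_list_distinct_conv_sum_set)
  then have "distinct (map set_encode (map set ls))"
    using assms(2) by metis
  then show ?thesis
    using distinct_map by blast
qed

lemma is_HS_K4e_of_block_list:
  fixes bs :: "'a list list"
  assumes "finite V" "H \<subseteq> V"
    and blocks: "\<forall>xs\<in>set bs. distinct xs \<and> length xs = 5 \<and> set xs \<subseteq> V"
    and outside_hole: "\<forall>t\<in>set (concat (map K4e_triples bs)). \<not> set t \<subseteq> H"
    and distinct_triples: "distinct (map set (concat (map K4e_triples bs)))"
    and count: "5 * length bs = (card V choose 3) - (card H choose 3)"
  shows "is_HS_K4e V H (K4e_copy ` set bs)"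
proof -
  let ?S = "{T. T \<subseteq> V \<and> card T = 3 \<and> \<not> T \<subseteq> H}"
  let ?es = "concat (map (\<lambda>xs. map set (K4e_triples xs)) bs)"
  have "?es = map set (concat (map K4e_triples bs))"
    by (simp add: map_concat comp_def)
  with distinct_triples have distinct_es: "distinct ?es"
    by simp
  have "set ?es \<subseteq> ?S"
  proof
    fix T assume "T \<in> set ?es"
    then obtain xs t where xs: "xs \<in> set bs" and t: "t \<in> set (K4e_triples xs)" and "T = set t"
      by auto
    moreover have "distinct t \<and> length t = 3 \<and> set t \<subseteq> set xs"
      using blocks xs t K4e_triples_are_3_subsets by blast
    moreover have "set xs \<subseteq> V"
      using blocks xs by blast
    ultimately show "T \<in> ?S"
      using outside_hole distinct_card[of t] by auto
  qed
  moreover have "card (set ?es) = card ?S"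
  proof -
    have "card (set ?es) = length ?es"
      using distinct_es by (rule distinct_card)
    also have "\<dots> = 5 * length bs"
      by (induction bs) (simp_all add: K4e_triples_def)
    finally show ?thesis
      using count card_triples_outside_hole[OF assms(1,2)] by simp
  qed
  moreover have "finite ?S"
    using assms(1) by (auto intro: finite_subset[of _ "Pow V"])
  ultimately have cover: "set ?es = ?S"
    by (simp add: card_subset_eq)
  show ?thesis
    unfolding is_HS_K4e_def
  proof (intro conjI)
    show "\<forall>b\<in>K4e_copy ` set bs. is_K4e_block V b"
    proof
      fix b assume "b \<in> K4e_copy ` set bs"
      then obtain xs where "xs \<in> set bs" and b: "b = K4e_copy xs"
        by blast
      then have "distinct xs" "length xs = 5" "set xs \<subseteq> V"
        using blocks by auto
      then show "is_K4e_block V b"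
        unfolding b by (rule is_K4e_block_K4e_copy)
    qed
    show "\<forall>b1\<in>K4e_copy ` set bs.
          \<forall>b2\<in>K4e_copy ` set bs. b1 \<noteq> b2 \<longrightarrow> b1 \<inter> b2 = {}"
    proof (intro ballI impI)
      fix b1 b2
      assume "b1 \<in> K4e_copy ` set bs" "b2 \<in> K4e_copy ` set bs" "b1 \<noteq> b2"
      then obtain xs ys where "xs \<in> set bs" "ys \<in> set bs"
        and b1: "b1 = set (map set (K4e_triples xs))" and b2: "b2 = set (map set (K4e_triples ys))"
        unfolding K4e_copy_def by blast
      then have "map set (K4e_triples xs) \<in> set (map (\<lambda>xs. map set (K4e_triples xs)) bs)"
        and "map set (K4e_triples ys) \<in> set (map (\<lambda>xs. map set (K4e_triples xs)) bs)"
        by auto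
      moreover have "map set (K4e_triples xs) \<noteq> map set (K4e_triples ys)"
        using \<open>b1 \<noteq> b2\<close> b1 b2 by metis
      ultimately show "b1 \<inter> b2 = {}"
        using distinct_es unfolding distinct_concat_iff b1 b2 by blast
    qed
    show "\<Union> (K4e_copy ` set bs) = ?S"
      using cover unfolding K4e_copy_def by auto
  qed
qed

definition HS_15_5_blocks :: "nat list list" where
  "HS_15_5_blocks =
   [[1,11,8,9,6], [0,11,1,10,3], [1,14,9,10,13], [2,6,3,14,11], [4,8,0,9,14], [5,8,7,14,0],
    [4,8,1,12,10], [7,11,3,4,10], [11,14,6,8,10], [7,12,3,13,1], [1,4,6,10,0], [6,10,13,14,8],
    [4,12,2,6,10], [3,8,5,9,12], [7,14,11,13,10], [2,14,8,9,12], [6,11,3,10,8], [4,11,12,13,0],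
    [6,7,2,5,4], [6,8,4,7,5], [4,9,6,14,5], [5,8,12,13,10], [0,5,4,11,10], [5,8,0,6,9],
    [3,13,0,10,9], [2,12,1,13,11], [5,11,7,12,1], [8,11,3,12,0], [4,13,3,9,1], [11,13,0,8,10],
    [8,13,7,9,5], [3,5,2,12,10], [1,6,5,9,4], [0,13,4,6,11], [9,12,13,14,1], [3,14,5,10,9],
    [1,5,0,12,9], [5,9,0,2,6], [4,5,3,6,7], [3,14,7,9,11], [0,1,7,8,12], [5,14,9,11,6],
    [6,11,0,7,13], [5,10,4,8,14], [1,12,3,14,13], [0,2,7,10,14], [3,6,9,12,4], [9,11,10,12,7],
    [7,13,1,6,3], [2,9,6,13,12], [2,8,5,11,10], [0,11,12,14,2], [1,4,7,9,0], [6,11,5,13,0],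
    [2,11,1,7,3], [4,14,2,7,13], [5,13,2,10,8], [2,7,3,8,4], [11,14,2,10,4], [0,2,13,14,5],
    [1,7,5,10,0], [2,8,0,12,10], [1,11,3,5,13], [0,7,4,12,3], [2,13,4,8,11], [9,11,0,3,6],
    [8,14,10,12,4], [2,6,1,8,5], [1,4,5,13,9], [3,13,6,8,12], [7,11,8,10,9], [6,11,1,12,9],
    [5,14,1,2,9], [5,6,10,12,3], [4,11,1,14,7], [7,14,6,12,0], [1,6,0,14,5], [10,13,1,8,14],
    [5,12,4,14,3], [0,3,5,7,13], [3,13,2,11,6], [0,1,9,13,11], [4,9,2,11,0], [7,9,2,12,11],
    [7,10,4,13,14], [3,9,2,10,1], [0,14,3,8,1], [0,14,4,10,9], [6,9,7,10,3]]"

lemma HS_15_5_blocks_wf: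
  "\<forall>xs\<in>set HS_15_5_blocks. distinct xs \<and> length xs = 5 \<and> set xs \<subseteq> {0..<15}"
  unfolding HS_15_5_blocks_def by simp

lemma HS_15_5_triples_outside_hole:
  "\<forall>t\<in>set (concat (map K4e_triples HS_15_5_blocks)). \<not> set t \<subseteq> {0..<5}"
  unfolding HS_15_5_blocks_def K4e_triples_def by simp

lemma HS_15_5_triples_distinct:
  "distinct (map set (concat (map K4e_triples HS_15_5_blocks)))"
proof (rule distinct_map_set_if_distinct_codes)
  show "\<forall>t\<in>set (concat (map K4e_triples HS_15_5_blocks)). distinct t"
    using HS_15_5_blocks_wf K4e_triples_are_3_subsets by fastforce
  show "distinct (map (\<lambda>l. \<Sum>x\<leftarrow>l. (2::nat) ^ x) (concat (map K4e_triples HS_15_5_blocks)))"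
    unfolding HS_15_5_blocks_def K4e_triples_def by simp
qed

lemma HS_15_5_count:
  "5 * length HS_15_5_blocks = (card {0..<15::nat} choose 3) - (card {0..<5::nat} choose 3)"
  unfolding HS_15_5_blocks_def by code_simp

theorem lemma3p7:
  shows "HS_K4e_exists 15 5"
proof -
  have "is_HS_K4e {0..<15} {0..<5} (K4e_copy ` set HS_15_5_blocks)"
    by (rule is_HS_K4e_of_block_list[OF _ _ HS_15_5_blocks_wf HS_15_5_triples_outside_hole
          HS_15_5_triples_distinct HS_15_5_count]) auto
  then show ?thesis
    unfolding HS_K4e_exists_def
    by (intro exI[of _ "{0..<15}"] exI[of _ "{0..<5}"] exI[of _ "K4e_copy ` set HS_15_5_blocks"]) auto
qed

end
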